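(* Let $\lambda$ be a partition with $|\lambda| = k$. Then for all $n \in \mathbb{N}$ (with $\mathbb{N}=\{0,1,2,\dots\}$), \[ \frac{1}{\# \mathcal{OT}(\lambda,k+2n)} \sum_{T \in \mathcal{OT}(\lambda,k+2n)} \mathrm{wt}(T) = \frac{1}{6}\left(4n^2 + 3k^2 + 8 kn + 2n +3k\right).\]
   Context: Young's lattice is the poset of all integer partitions ordered by inclusion of Young diagrams; write $\mu \lessdot \lambda$ if the Young diagram of $\lambda$ is obtained from that of $\mu$ by adding one box. $|\lambda|$ denotes the size (number of boxes) of $\lambda$. A walk in Young's lattice is a sequence of partitions $(\lambda^{0},\lambda^{1},\ldots,\lambda^{l})$ such that for each $1\le i\le l$ either $\lambda^{i-1}\lessdot\lambda^{i}$ or $\lambda^{i}\lessdot\lambda^{i-1}$. An oscillating tableau of shape $\lambda$ and length $l$ is such a walk with $\lambda^{0}=\emptyset$ (the empty partition) and $\lambda^{l}=\lambda$; $\mathcal{OT}(\lambda,l)$ denotes the set of all of them. The weight of $T=(\lambda^{0},\ldots,\lambda^{l})$ is $\mathrm{wt}(T) := \sum_{i=0}^{l}|\lambda^{i}|$. (The set $\mathcal{OT}(\lambda,k+2n)$ is nonempty for all $n\in\mathbb{N}$.) *)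

theory Defs
  imports Main Complex_Main
begin

definition is_partition :: "nat list \<Rightarrow> bool" where
  "is_partition p \<longleftrightarrow> sorted_wrt (\<ge>) p \<and> (\<forall>x\<in>set p. 0 < x)"

definition psize :: "nat list \<Rightarrow> nat" where
  "psize p = sum_list p"

definition diagram :: "nat list \<Rightarrow> (nat \<times> nat) set" where
  "diagram p = {(i, j). i < length p \<and> j < p ! i}"

definition covers :: "nat list \<Rightarrow> nat list \<Rightarrow> bool" where
  "covers mu lam \<longleftrightarrow> is_partition mu \<and> is_partition lam \<and>
     diagram mu \<subseteq> diagram lam \<and> card (diagram lam - diagram mu) = 1"

definition OT :: "nat list \<Rightarrow> nat \<Rightarrow> nat list list set" where
  "OT lam l = {T. length T = l + 1 \<and> T ! 0 = [] \<and> T ! l = lam \<and>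
     (\<forall>i. 1 \<le> i \<and> i \<le> l \<longrightarrow> covers (T ! (i - 1)) (T ! i) \<or> covers (T ! i) (T ! (i - 1)))}"

definition wt :: "nat list list \<Rightarrow> nat" where
  "wt T = (\<Sum>i\<le>length T - 1. psize (T ! i))"

end

theory Submission
  imports Defs
begin

text \<open>Splitting an oscillating tableau at its last
  step gives recursions over the removable and the addable boxes of the shape. The number
  \<open>f(\<lambda>)\<close> of standard Young tableaux satisfies \<open>f(\<lambda>) = \<Sum>\<^bsub>\<mu> \<lessdot> \<lambda>\<^esub> f(\<mu>)\<close> and, by the
  commutation relation \<open>DU - UD = I\<close> of Young's lattice, \<open>\<Sum>\<^bsub>\<lambda> \<lessdot> \<nu>\<^esub> f(\<nu>) = (|\<lambda>| + 1) f(\<lambda>)\<close>.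
  Hence, by induction on the length, the number of oscillating tableaux and their total weight
  are \<open>f(\<lambda>)\<close> times coefficients depending only on the length and on \<open>|\<lambda>|\<close>; for length
  \<open>k + 2n\<close> these are \<open>(k + 2n)! / (k! 2\<^sup>n n!)\<close> and that number times the claimed mean.\<close>

section \<open>Partitions as row-length functions\<close>

definition row_fun :: "nat list \<Rightarrow> nat \<Rightarrow> nat" where
  "row_fun p i = (if i < length p then p ! i else 0)"

definition is_row_fun :: "(nat \<Rightarrow> nat) \<Rightarrow> bool" where
  "is_row_fun r \<longleftrightarrow> (\<forall>i. r (Suc i) \<le> r i) \<and> (\<exists>n. r n = 0)"

definition nrows :: "(nat \<Rightarrow> nat) \<Rightarrow> nat" where
  "nrows r = (LEAST n. r n = 0)"

definition partition_of :: "(nat \<Rightarrow> nat) \<Rightarrow> nat list" where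
  "partition_of r = map r [0..<nrows r]"

definition row_sum :: "(nat \<Rightarrow> nat) \<Rightarrow> nat" where
  "row_sum r = (\<Sum>i<nrows r. r i)"

definition add_box :: "(nat \<Rightarrow> nat) \<Rightarrow> nat \<Rightarrow> nat \<Rightarrow> nat" where
  "add_box r i = r(i := Suc (r i))"

definition del_box :: "(nat \<Rightarrow> nat) \<Rightarrow> nat \<Rightarrow> nat \<Rightarrow> nat" where
  "del_box r j = r(j := r j - 1)"

definition addable :: "(nat \<Rightarrow> nat) \<Rightarrow> nat set" where
  "addable r = {i. i = 0 \<or> r i < r (i - 1)}"

definition removable :: "(nat \<Rightarrow> nat) \<Rightarrow> nat set" where
  "removable r = {j. r (Suc j) < r j}"

lemma is_row_fun_antimono: assumes "is_row_fun r" "i \<le> j" shows "r j \<le> r i"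
  using lift_Suc_antimono_le[of r i j] assms unfolding is_row_fun_def by blast

lemma row_fun_eq_0_iff: assumes "is_row_fun r" shows "r i = 0 \<longleftrightarrow> nrows r \<le> i"
proof
  assume "r i = 0" then show "nrows r \<le> i" unfolding nrows_def by (rule Least_le)
next
  assume "nrows r \<le> i"
  have "\<exists>n. r n = 0" using assms unfolding is_row_fun_def by blast
  then have "r (nrows r) = 0" unfolding nrows_def by (rule LeastI_ex)
  then show "r i = 0" using is_row_fun_antimono[OF assms \<open>nrows r \<le> i\<close>] by simp
qed

lemma nrows_le: "r m = 0 \<Longrightarrow> nrows r \<le> m"
  unfolding nrows_def by (rule Least_le)

lemma addable_subset: assumes "is_row_fun r" shows "addable r \<subseteq> {..nrows r}"
proof
  fix i assume "i \<in> addable r"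
  then have "i = 0 \<or> 0 < r (i - 1)" unfolding addable_def by auto
  then show "i \<in> {..nrows r}" using row_fun_eq_0_iff[OF assms, of "i - 1"] by auto
qed

lemma removable_subset: assumes "is_row_fun r" shows "removable r \<subseteq> {..<nrows r}"
proof
  fix j assume "j \<in> removable r"
  then have "0 < r j" unfolding removable_def by auto
  then show "j \<in> {..<nrows r}" using row_fun_eq_0_iff[OF assms, of j] by auto
qed

lemma finite_addable: "is_row_fun r \<Longrightarrow> finite (addable r)"
  using addable_subset finite_subset by blast

lemma finite_removable: "is_row_fun r \<Longrightarrow> finite (removable r)"
  using removable_subset finite_subset by blast

lemma addable_conv_removable: "addable r = insert 0 (Suc ` removable r)"
proof -
  have "i \<in> addable r \<longleftrightarrow> i \<in> insert 0 (Suc ` removable r)" for i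
    unfolding addable_def removable_def by (cases i) auto
  then show ?thesis by blast
qed

lemma card_addable: "is_row_fun r \<Longrightarrow> card (addable r) = Suc (card (removable r))"
  unfolding addable_conv_removable by (simp add: card_image finite_removable)

lemma is_row_fun_add_box_iff: assumes "is_row_fun r"
  shows "is_row_fun (add_box r i) \<longleftrightarrow> i \<in> addable r"
proof
  assume "is_row_fun (add_box r i)"
  then have "add_box r i (Suc (i - 1)) \<le> add_box r i (i - 1)" unfolding is_row_fun_def by blast
  then show "i \<in> addable r" unfolding add_box_def addable_def by (cases i) auto
next
  assume i: "i \<in> addable r"
  have antimono: "r (Suc x) \<le> r x" for x using assms unfolding is_row_fun_def by blast
  have "add_box r i (Suc x) \<le> add_box r i x" for x
    using antimono[of x] i unfolding add_box_def addable_def by (cases "Suc x = i") auto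
  moreover have "add_box r i (Suc i + nrows r) = 0"
    using row_fun_eq_0_iff[OF assms] unfolding add_box_def by auto
  ultimately show "is_row_fun (add_box r i)" unfolding is_row_fun_def by blast
qed

lemma is_row_fun_del_box: assumes "is_row_fun r" "j \<in> removable r" shows "is_row_fun (del_box r j)"
proof -
  have antimono: "r (Suc x) \<le> r x" for x using assms(1) unfolding is_row_fun_def by blast
  have "del_box r j (Suc x) \<le> del_box r j x" for x
    using antimono[of x] assms(2) unfolding del_box_def removable_def by auto
  moreover have "del_box r j (Suc j + nrows r) = 0"
    using row_fun_eq_0_iff[OF assms(1)] unfolding del_box_def by auto
  ultimately show ?thesis unfolding is_row_fun_def by blast
qed

lemma del_box_add_box [simp]: "del_box (add_box r i) i = r"
  unfolding add_box_def del_box_def by auto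

lemma add_box_del_box: "0 < r j \<Longrightarrow> add_box (del_box r j) j = r"
  unfolding add_box_def del_box_def by auto

lemma add_box_del_box_swap: "i \<noteq> j \<Longrightarrow> del_box (add_box r i) j = add_box (del_box r j) i"
  unfolding add_box_def del_box_def by (auto simp: fun_upd_twist)

lemma removable_add_box: "is_row_fun r \<Longrightarrow> i \<in> removable (add_box r i)"
  unfolding is_row_fun_def removable_def add_box_def by (simp add: le_imp_less_Suc)

lemma addable_del_box: assumes "is_row_fun r" "j \<in> removable r" shows "j \<in> addable (del_box r j)"
proof (cases j)
  case (Suc j')
  have "r j \<le> r j'" using is_row_fun_antimono[OF assms(1)] Suc by simp
  moreover have "0 < r j" using assms(2) unfolding removable_def by auto
  ultimately show ?thesis unfolding addable_def del_box_def Suc by simp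
qed (simp add: addable_def)

lemma add_then_del_iff_del_then_add:
  "(i \<in> addable r \<and> j \<in> removable (add_box r i) - {i}) \<longleftrightarrow>
   (j \<in> removable r \<and> i \<in> addable (del_box r j) - {j})"
  unfolding addable_def removable_def add_box_def del_box_def by (cases i) (auto split: if_splits)

lemma row_sum_conv_sum: assumes "is_row_fun r" "r m = 0" shows "row_sum r = (\<Sum>i<m. r i)"
  unfolding row_sum_def
  by (rule sum.mono_neutral_left) (use assms row_fun_eq_0_iff[OF assms(1)] nrows_le in auto)

lemma sum_fun_upd:
  fixes f :: "'a \<Rightarrow> 'b::comm_monoid_add"
  assumes "finite A" "i \<in> A" shows "sum (f(i := v)) A + f i = sum f A + v"
proof -
  have "sum (f(i := v)) (A - {i}) = sum f (A - {i})" by (rule sum.cong) auto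
  then show ?thesis using sum.remove[OF assms, of f] sum.remove[OF assms, of "f(i := v)"]
    by (simp add: ac_simps)
qed

lemma row_sum_add_box: assumes "is_row_fun r" "i \<in> addable r"
  shows "row_sum (add_box r i) = Suc (row_sum r)"
proof -
  define m where "m = Suc i + nrows r"
  have "r m = 0" "add_box r i m = 0"
    using row_fun_eq_0_iff[OF assms(1)] unfolding m_def add_box_def by auto
  then have "row_sum (add_box r i) = sum (add_box r i) {..<m}" "row_sum r = sum r {..<m}"
    using row_sum_conv_sum assms is_row_fun_add_box_iff[OF assms(1)] by auto
  moreover have "sum (add_box r i) {..<m} + r i = sum r {..<m} + Suc (r i)"
    unfolding add_box_def by (rule sum_fun_upd) (auto simp: m_def)
  ultimately show ?thesis by simp
qed

lemma row_sum_del_box: assumes "is_row_fun r" "j \<in> removable r"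
  shows "Suc (row_sum (del_box r j)) = row_sum r"
proof -
  have "0 < r j" using assms(2) unfolding removable_def by auto
  then show ?thesis
    using row_sum_add_box[OF is_row_fun_del_box[OF assms], of j] assms
      is_row_fun_add_box_iff[OF is_row_fun_del_box[OF assms], of j]
    by (simp add: add_box_del_box)
qed

lemma removable_empty: "is_row_fun r \<Longrightarrow> row_sum r = 0 \<Longrightarrow> removable r = {}"
  using row_sum_del_box by fastforce

lemma is_row_fun_row_fun: assumes "is_partition p" shows "is_row_fun (row_fun p)"
proof -
  have "p ! j \<le> p ! i" if "i < j" "j < length p" for i j
    using assms that unfolding is_partition_def sorted_wrt_iff_nth_less by blast
  then have "row_fun p (Suc i) \<le> row_fun p i" for i unfolding row_fun_def by auto
  moreover have "row_fun p (length p) = 0" unfolding row_fun_def by simp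
  ultimately show ?thesis unfolding is_row_fun_def by blast
qed

lemma nrows_row_fun: assumes "is_partition p" shows "nrows (row_fun p) = length p"
proof -
  have "row_fun p i = 0 \<longleftrightarrow> length p \<le> i" for i
    using assms unfolding row_fun_def is_partition_def by (auto simp: in_set_conv_nth)
  then have "nrows (row_fun p) \<le> i \<longleftrightarrow> length p \<le> i" for i
    using row_fun_eq_0_iff[OF is_row_fun_row_fun[OF assms]] by blast
  then show ?thesis by (metis le_antisym order_refl)
qed

lemma partition_of_row_fun: assumes "is_partition p" shows "partition_of (row_fun p) = p"
  unfolding partition_of_def nrows_row_fun[OF assms]
  by (rule nth_equalityI) (auto simp: row_fun_def)

lemma is_partition_partition_of: assumes "is_row_fun r" shows "is_partition (partition_of r)"
proof -
  have "0 < r i" if "i < nrows r" for i using that row_fun_eq_0_iff[OF assms, of i] by simp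
  then show ?thesis using is_row_fun_antimono[OF assms]
    unfolding is_partition_def sorted_wrt_iff_nth_less partition_of_def by auto
qed

lemma row_fun_partition_of: assumes "is_row_fun r" shows "row_fun (partition_of r) = r"
proof
  fix i show "row_fun (partition_of r) i = r i"
    unfolding row_fun_def partition_of_def using row_fun_eq_0_iff[OF assms, of i] by auto
qed

lemma psize_partition_of: "psize (partition_of r) = row_sum r"
  unfolding psize_def partition_of_def row_sum_def
  by (simp add: sum_set_upt_conv_sum_list_nat[symmetric] atLeast0LessThan)

lemma psize_eq_row_sum: "is_partition p \<Longrightarrow> psize p = row_sum (row_fun p)"
  using psize_partition_of[of "row_fun p"] partition_of_row_fun by simp

lemma partition_of_eq_Nil_iff: assumes "is_row_fun r" shows "partition_of r = [] \<longleftrightarrow> row_sum r = 0"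
proof -
  have "row_sum r = 0 \<longleftrightarrow> (\<forall>i<nrows r. r i = 0)" unfolding row_sum_def by auto
  also have "\<dots> \<longleftrightarrow> nrows r = 0" using row_fun_eq_0_iff[OF assms, of 0] by auto
  finally show ?thesis unfolding partition_of_def by simp
qed

section \<open>The covering relation\<close>

lemma diagram_row_fun: "diagram p = {(i, j). j < row_fun p i}"
  unfolding diagram_def row_fun_def by (auto split: if_splits)

lemma diagram_Sigma: "diagram p = Sigma {..<length p} (\<lambda>i. {..<p ! i})"
  unfolding diagram_def by auto

lemma finite_diagram: "finite (diagram p)"
  unfolding diagram_Sigma by simp

lemma card_diagram: "card (diagram p) = psize p"
  unfolding diagram_Sigma psize_def by (simp add: sum_list_sum_nth atLeast0LessThan)

lemma covers_iff_add_box: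
  "covers mu lam \<longleftrightarrow> is_partition mu \<and> is_partition lam \<and> (\<exists>i. row_fun lam = add_box (row_fun mu) i)"
proof (intro iffI conjI)
  assume cov: "covers mu lam"
  then show mu: "is_partition mu" and "is_partition lam" unfolding covers_def by auto
  define a where "a = row_fun mu"
  define b where "b = row_fun lam"
  have diff: "diagram lam - diagram mu = {(x, y). a x \<le> y \<and> y < b x}"
    unfolding diagram_row_fun a_def b_def by auto
  have le: "a x \<le> b x" for x
  proof (rule ccontr)
    assume "\<not> a x \<le> b x"
    then have "(x, b x) \<in> diagram mu - diagram lam" unfolding diagram_row_fun a_def b_def by auto
    then show False using cov unfolding covers_def by blast
  qed
  obtain c where "diagram lam - diagram mu = {c}"
    using cov card_1_singletonE unfolding covers_def by blast
  moreover obtain i j where "c = (i, j)" by fastforce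
  ultimately have "(x, y) \<in> diagram lam - diagram mu \<longleftrightarrow> x = i \<and> y = j" for x y by simp
  then have cell: "a x \<le> y \<and> y < b x \<longleftrightarrow> x = i \<and> y = j" for x y unfolding diff by simp
  have "b x = add_box a i x" for x
  proof (cases "x = i")
    case True
    then show ?thesis using cell[of i "a i"] cell[of i "Suc (a i)"] cell[of i j] le[of i]
      unfolding add_box_def by fastforce
  next
    case False
    then show ?thesis using cell[of x "a x"] le[of x] unfolding add_box_def by fastforce
  qed
  then show "\<exists>i. row_fun lam = add_box (row_fun mu) i" unfolding a_def b_def by blast
next
  assume "is_partition mu \<and> is_partition lam \<and> (\<exists>i. row_fun lam = add_box (row_fun mu) i)"
  then obtain i where parts: "is_partition mu" "is_partition lam"
    and i: "row_fun lam = add_box (row_fun mu) i" by blast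
  have "diagram lam = insert (i, row_fun mu i) (diagram mu)"
    unfolding diagram_row_fun i add_box_def by (auto split: if_splits)
  moreover have "(i, row_fun mu i) \<notin> diagram mu" unfolding diagram_row_fun by simp
  ultimately have "diagram mu \<subseteq> diagram lam" "diagram lam - diagram mu = {(i, row_fun mu i)}"
    by auto
  then show "covers mu lam" unfolding covers_def using parts by auto
qed

lemma psize_covers: assumes "covers mu lam" shows "psize lam = Suc (psize mu)"
proof -
  have sub: "diagram mu \<subseteq> diagram lam" and "card (diagram lam - diagram mu) = 1"
    using assms unfolding covers_def by auto
  then have "card (diagram lam) - card (diagram mu) = 1"
    using card_Diff_subset[OF finite_diagram sub] by simp
  moreover have "card (diagram mu) \<le> card (diagram lam)" by (rule card_mono[OF finite_diagram sub])
  ultimately show ?thesis unfolding card_diagram by simp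
qed

definition lower_covers :: "nat list \<Rightarrow> nat list set" where
  "lower_covers lam = {mu. covers mu lam}"

definition upper_covers :: "nat list \<Rightarrow> nat list set" where
  "upper_covers lam = {nu. covers lam nu}"

lemma upper_covers_eq: assumes "is_row_fun r"
  shows "upper_covers (partition_of r) = (\<lambda>i. partition_of (add_box r i)) ` addable r"
proof (intro set_eqI iffI)
  fix nu assume "nu \<in> upper_covers (partition_of r)"
  then obtain i where nu: "is_partition nu" and i: "row_fun nu = add_box r i"
    unfolding upper_covers_def covers_iff_add_box row_fun_partition_of[OF assms] by blast
  have "i \<in> addable r"
    using is_row_fun_row_fun[OF nu] is_row_fun_add_box_iff[OF assms] i by simp
  moreover have "nu = partition_of (add_box r i)" using partition_of_row_fun[OF nu] i by simp
  ultimately show "nu \<in> (\<lambda>i. partition_of (add_box r i)) ` addable r" by blast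
next
  fix nu assume "nu \<in> (\<lambda>i. partition_of (add_box r i)) ` addable r"
  then obtain i where i: "i \<in> addable r" and nu: "nu = partition_of (add_box r i)" by blast
  have "is_row_fun (add_box r i)" using is_row_fun_add_box_iff[OF assms] i by simp
  then show "nu \<in> upper_covers (partition_of r)"
    unfolding upper_covers_def covers_iff_add_box nu
    using assms is_partition_partition_of row_fun_partition_of by auto
qed

lemma lower_covers_eq: assumes "is_row_fun r"
  shows "lower_covers (partition_of r) = (\<lambda>j. partition_of (del_box r j)) ` removable r"
proof (intro set_eqI iffI)
  fix mu assume "mu \<in> lower_covers (partition_of r)"
  then obtain j where mu: "is_partition mu" and j: "r = add_box (row_fun mu) j"
    unfolding lower_covers_def covers_iff_add_box row_fun_partition_of[OF assms] by blast
  have "row_fun mu (Suc j) \<le> row_fun mu j"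
    using is_row_fun_row_fun[OF mu] unfolding is_row_fun_def by blast
  then have "j \<in> removable r" unfolding j removable_def add_box_def by simp
  moreover have "mu = partition_of (del_box r j)" using partition_of_row_fun[OF mu] j by simp
  ultimately show "mu \<in> (\<lambda>j. partition_of (del_box r j)) ` removable r" by blast
next
  fix mu assume "mu \<in> (\<lambda>j. partition_of (del_box r j)) ` removable r"
  then obtain j where j: "j \<in> removable r" and mu: "mu = partition_of (del_box r j)" by blast
  have d: "is_row_fun (del_box r j)" using is_row_fun_del_box[OF assms j] .
  have "0 < r j" using j unfolding removable_def by auto
  then have "row_fun (partition_of r) = add_box (row_fun mu) j"
    unfolding mu row_fun_partition_of[OF assms] row_fun_partition_of[OF d]
    by (simp add: add_box_del_box)
  then show "mu \<in> lower_covers (partition_of r)"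
    unfolding lower_covers_def covers_iff_add_box mu
    using assms d is_partition_partition_of by blast
qed

lemma inj_on_add_box: assumes "is_row_fun r"
  shows "inj_on (\<lambda>i. partition_of (add_box r i)) (addable r)"
proof
  fix i i' assume "i \<in> addable r" "i' \<in> addable r"
    and eq: "partition_of (add_box r i) = partition_of (add_box r i')"
  then have "is_row_fun (add_box r i)" "is_row_fun (add_box r i')"
    using is_row_fun_add_box_iff[OF assms] by auto
  then have "add_box r i = add_box r i'"
    using arg_cong[OF eq, of row_fun] row_fun_partition_of by simp
  then have "add_box r i i = add_box r i' i" by simp
  then show "i = i'" unfolding add_box_def by (cases "i = i'") auto
qed

lemma inj_on_del_box: assumes "is_row_fun r"
  shows "inj_on (\<lambda>j. partition_of (del_box r j)) (removable r)"
proof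
  fix j j' assume j: "j \<in> removable r" "j' \<in> removable r"
    and eq: "partition_of (del_box r j) = partition_of (del_box r j')"
  then have "is_row_fun (del_box r j)" "is_row_fun (del_box r j')"
    using is_row_fun_del_box[OF assms] by auto
  then have "del_box r j = del_box r j'"
    using arg_cong[OF eq, of row_fun] row_fun_partition_of by simp
  then have "del_box r j j = del_box r j' j" by simp
  moreover have "0 < r j" using j unfolding removable_def by auto
  ultimately show "j = j'" unfolding del_box_def by (cases "j = j'") auto
qed

lemma finite_lower_covers: "finite (lower_covers p)"
proof (cases "is_partition p")
  case True
  then have r: "is_row_fun (row_fun p)" by (rule is_row_fun_row_fun)
  have "finite (lower_covers (partition_of (row_fun p)))"
    unfolding lower_covers_eq[OF r] using finite_removable[OF r] by simp
  then show ?thesis using partition_of_row_fun[OF True] by simp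
qed (simp add: lower_covers_def covers_def)

lemma finite_upper_covers: "finite (upper_covers p)"
proof (cases "is_partition p")
  case True
  then have r: "is_row_fun (row_fun p)" by (rule is_row_fun_row_fun)
  have "finite (upper_covers (partition_of (row_fun p)))"
    unfolding upper_covers_eq[OF r] using finite_addable[OF r] by simp
  then show ?thesis using partition_of_row_fun[OF True] by simp
qed (simp add: upper_covers_def covers_def)

lemma lower_upper_covers_disjoint: "lower_covers p \<inter> upper_covers p = {}"
  unfolding lower_covers_def upper_covers_def using psize_covers[of _ p] psize_covers[of p] by force

section \<open>Oscillating tableaux by their last step\<close>

lemma OT_0: "OT lam 0 = (if lam = [] then {[[]]} else {})"
proof -
  have "T \<in> OT lam 0 \<longleftrightarrow> lam = [] \<and> T = [[]]" for T
    unfolding OT_def by (cases T) auto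
  then show ?thesis by auto
qed

definition adjacent :: "nat list \<Rightarrow> nat list \<Rightarrow> bool" where
  "adjacent mu lam \<longleftrightarrow> covers mu lam \<or> covers lam mu"

lemma OT_iff: "T \<in> OT lam l \<longleftrightarrow>
  length T = Suc l \<and> T ! 0 = [] \<and> T ! l = lam \<and> (\<forall>i<l. adjacent (T ! i) (T ! Suc i))"
proof -
  have "(\<forall>i. 1 \<le> i \<and> i \<le> l \<longrightarrow> adjacent (T ! (i - 1)) (T ! i)) \<longleftrightarrow>
        (\<forall>i<l. adjacent (T ! i) (T ! Suc i))"
  proof (intro iffI allI impI)
    fix i assume "\<forall>i. 1 \<le> i \<and> i \<le> l \<longrightarrow> adjacent (T ! (i - 1)) (T ! i)" "i < l"
    then show "adjacent (T ! i) (T ! Suc i)" by (auto dest: spec[of _ "Suc i"])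
  next
    fix i assume "\<forall>i<l. adjacent (T ! i) (T ! Suc i)" "1 \<le> i \<and> i \<le> l"
    then show "adjacent (T ! (i - 1)) (T ! i)" by (cases i) auto
  qed
  then show ?thesis unfolding OT_def adjacent_def by simp
qed

lemma snoc_in_OT_iff: assumes "length T = Suc L"
  shows "T @ [lam] \<in> OT lam (Suc L) \<longleftrightarrow> T \<in> OT (T ! L) L \<and> adjacent (T ! L) lam"
proof -
  have "(T @ [lam]) ! i = T ! i" if "i \<le> L" for i using assms that by (simp add: nth_append)
  moreover have "(T @ [lam]) ! Suc L = lam" using assms by (simp add: nth_append)
  ultimately show ?thesis using assms unfolding OT_iff by (auto simp: less_Suc_eq)
qed

lemma OT_Suc:
  "OT lam (Suc L) = (\<lambda>T. T @ [lam]) ` (\<Union>mu \<in> lower_covers lam \<union> upper_covers lam. OT mu L)"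
proof (intro set_eqI iffI)
  fix T' assume T': "T' \<in> OT lam (Suc L)"
  define T where "T = butlast T'"
  have len: "length T' = Suc (Suc L)" using T' unfolding OT_iff by simp
  then have ne: "T' \<noteq> []" by auto
  then have "last T' = lam" using last_conv_nth[OF ne] len T' unfolding OT_iff by simp
  then have "T' = T @ [lam]" "length T = Suc L"
    using append_butlast_last_id[OF ne] len unfolding T_def by auto
  moreover from this have "T \<in> OT (T ! L) L" "T ! L \<in> lower_covers lam \<union> upper_covers lam"
    using T' snoc_in_OT_iff unfolding lower_covers_def upper_covers_def adjacent_def by auto
  ultimately show "T' \<in> (\<lambda>T. T @ [lam]) ` (\<Union>mu \<in> lower_covers lam \<union> upper_covers lam. OT mu L)"
    by blast
next
  fix T' assume "T' \<in> (\<lambda>T. T @ [lam]) ` (\<Union>mu \<in> lower_covers lam \<union> upper_covers lam. OT mu L)"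
  then obtain T mu where T': "T' = T @ [lam]" and T: "T \<in> OT mu L" and "adjacent mu lam"
    unfolding lower_covers_def upper_covers_def adjacent_def by blast
  moreover from T have "length T = Suc L" "T ! L = mu" unfolding OT_iff by auto
  ultimately show "T' \<in> OT lam (Suc L)" using snoc_in_OT_iff by simp
qed

lemma finite_OT: "finite (OT lam L)"
  by (induction L arbitrary: lam) (auto simp: OT_0 OT_Suc finite_lower_covers finite_upper_covers)

lemma wt_eq_sum_list: "T \<noteq> [] \<Longrightarrow> wt T = (\<Sum>p\<leftarrow>T. psize p)"
  unfolding wt_def by (simp add: sum_list_sum_nth atLeast0LessThan lessThan_Suc_atMost[symmetric])

lemma wt_snoc: "T \<noteq> [] \<Longrightarrow> wt (T @ [lam]) = wt T + psize lam"
  by (simp add: wt_eq_sum_list)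

lemma OT_disjoint: "mu \<noteq> mu' \<Longrightarrow> OT mu L \<inter> OT mu' L = {}"
  by (auto simp: OT_iff)

lemma sum_OT_Suc:
  fixes g :: "nat list list \<Rightarrow> 'a::comm_monoid_add"
  assumes r: "is_row_fun r"
  defines "lam \<equiv> partition_of r"
  shows "(\<Sum>T\<in>OT lam (Suc L). g T) =
    (\<Sum>j\<in>removable r. \<Sum>T\<in>OT (partition_of (del_box r j)) L. g (T @ [lam])) +
    (\<Sum>i\<in>addable r. \<Sum>T\<in>OT (partition_of (add_box r i)) L. g (T @ [lam]))"
proof -
  have fin: "finite (lower_covers lam)" "finite (upper_covers lam)"
    by (rule finite_lower_covers finite_upper_covers)+
  have "(\<Sum>T\<in>OT lam (Suc L). g T) =
        (\<Sum>T\<in>(\<Union>mu \<in> lower_covers lam \<union> upper_covers lam. OT mu L). g (T @ [lam]))"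
    unfolding OT_Suc by (rule sum.reindex_cong[OF _ refl refl]) (simp add: inj_on_def)
  also have "\<dots> = (\<Sum>mu \<in> lower_covers lam \<union> upper_covers lam. \<Sum>T\<in>OT mu L. g (T @ [lam]))"
    by (rule sum.UNION_disjoint) (use fin finite_OT OT_disjoint in auto)
  also have "\<dots> = (\<Sum>mu \<in> lower_covers lam. \<Sum>T\<in>OT mu L. g (T @ [lam])) +
                  (\<Sum>mu \<in> upper_covers lam. \<Sum>T\<in>OT mu L. g (T @ [lam]))"
    by (rule sum.union_disjoint) (use fin lower_upper_covers_disjoint in auto)
  finally show ?thesis
    unfolding lam_def lower_covers_eq[OF r] upper_covers_eq[OF r]
    by (simp add: sum.reindex inj_on_del_box[OF r] inj_on_add_box[OF r])
qed

definition ot_count :: "(nat \<Rightarrow> nat) \<Rightarrow> nat \<Rightarrow> nat" where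
  "ot_count r L = card (OT (partition_of r) L)"

definition ot_weight :: "(nat \<Rightarrow> nat) \<Rightarrow> nat \<Rightarrow> nat" where
  "ot_weight r L = (\<Sum>T\<in>OT (partition_of r) L. wt T)"

lemma ot_count_0: "is_row_fun r \<Longrightarrow> ot_count r 0 = (if row_sum r = 0 then 1 else 0)"
  unfolding ot_count_def OT_0 by (simp add: partition_of_eq_Nil_iff)

lemma ot_weight_0: "ot_weight r 0 = 0"
  unfolding ot_weight_def OT_0 by (simp add: wt_def psize_def)

lemma ot_count_Suc: assumes "is_row_fun r"
  shows "ot_count r (Suc L) =
    (\<Sum>j\<in>removable r. ot_count (del_box r j) L) + (\<Sum>i\<in>addable r. ot_count (add_box r i) L)"
  using sum_OT_Suc[OF assms, of "\<lambda>_. 1::nat"] unfolding ot_count_def by simp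

lemma ot_weight_Suc: assumes "is_row_fun r"
  shows "ot_weight r (Suc L) =
    (\<Sum>j\<in>removable r. ot_weight (del_box r j) L + row_sum r * ot_count (del_box r j) L) +
    (\<Sum>i\<in>addable r. ot_weight (add_box r i) L + row_sum r * ot_count (add_box r i) L)"
proof -
  have "(\<Sum>T\<in>OT mu L. wt (T @ [partition_of r])) = (\<Sum>T\<in>OT mu L. wt T) + row_sum r * card (OT mu L)"
    for mu
  proof -
    have "T \<noteq> []" if "T \<in> OT mu L" for T using that unfolding OT_iff by auto
    then show ?thesis by (simp add: wt_snoc psize_partition_of sum.distrib)
  qed
  then show ?thesis using sum_OT_Suc[OF assms, of wt] unfolding ot_weight_def ot_count_def by simp
qed

lemma ot_count_below_size: "is_row_fun r \<Longrightarrow> L < row_sum r \<Longrightarrow> ot_count r L = 0"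
proof (induction L arbitrary: r)
  case 0
  then show ?case by (simp add: ot_count_0)
next
  case (Suc L)
  have "ot_count (del_box r j) L = 0" if "j \<in> removable r" for j
    using Suc is_row_fun_del_box row_sum_del_box that by force
  moreover have "ot_count (add_box r i) L = 0" if "i \<in> addable r" for i
    using Suc is_row_fun_add_box_iff row_sum_add_box that by force
  ultimately show ?case by (simp add: ot_count_Suc[OF Suc.prems(1)])
qed

section \<open>Standard Young tableaux\<close>

text \<open>An oscillating tableau of length \<open>|\<lambda>|\<close> can only add boxes, so these are the
  standard Young tableaux of shape \<open>\<lambda>\<close>.\<close>
definition syt_count :: "(nat \<Rightarrow> nat) \<Rightarrow> nat" where
  "syt_count r = ot_count r (row_sum r)"

lemma syt_count_empty: "is_row_fun r \<Longrightarrow> row_sum r = 0 \<Longrightarrow> syt_count r = 1"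
  unfolding syt_count_def by (simp add: ot_count_0)

lemma syt_count_eq_sum_removable: assumes "is_row_fun r" "0 < row_sum r"
  shows "syt_count r = (\<Sum>j\<in>removable r. syt_count (del_box r j))"
proof -
  obtain m where m: "row_sum r = Suc m" using assms(2) gr0_conv_Suc by blast
  have "ot_count (add_box r i) m = 0" if "i \<in> addable r" for i
    using ot_count_below_size is_row_fun_add_box_iff[OF assms(1)] row_sum_add_box[OF assms(1)]
      m that by simp
  moreover have "ot_count (del_box r j) m = syt_count (del_box r j)" if "j \<in> removable r" for j
    using row_sum_del_box[OF assms(1) that] m unfolding syt_count_def by simp
  ultimately show ?thesis unfolding syt_count_def m ot_count_Suc[OF assms(1)] by simp
qed

lemma syt_count_pos: "is_row_fun r \<Longrightarrow> 0 < syt_count r"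
proof (induction "row_sum r" arbitrary: r rule: less_induct)
  case less
  show ?case
  proof (cases "row_sum r = 0")
    case True
    then show ?thesis using syt_count_empty less.prems by simp
  next
    case False
    define j where "j = nrows r - 1"
    have "0 < nrows r" using False unfolding row_sum_def by (intro gr0I) auto
    then have "r (Suc j) = 0" "r j \<noteq> 0"
      using row_fun_eq_0_iff[OF less.prems, of j] row_fun_eq_0_iff[OF less.prems, of "Suc j"]
      unfolding j_def by auto
    then have j: "j \<in> removable r" unfolding removable_def by simp
    have "0 < syt_count (del_box r j)"
      using less.hyps[OF _ is_row_fun_del_box[OF less.prems j]] row_sum_del_box[OF less.prems j]
      by simp
    also have "\<dots> \<le> (\<Sum>j\<in>removable r. syt_count (del_box r j))"
      by (rule member_le_sum[OF j]) (simp_all add: finite_removable less.prems)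
    finally show ?thesis using syt_count_eq_sum_removable less.prems False by simp
  qed
qed

text \<open>Moving a box from one row to another can be done by adding first or by removing first;
  this is the commutation relation \<open>DU - UD = I\<close> of Young's lattice, the case \<open>i = j\<close>
  being excluded on both sides.\<close>
lemma sum_add_del_box_swap:
  fixes g :: "(nat \<Rightarrow> nat) \<Rightarrow> 'a::comm_monoid_add"
  assumes r: "is_row_fun r"
  shows "(\<Sum>i\<in>addable r. \<Sum>j\<in>removable (add_box r i) - {i}. g (del_box (add_box r i) j)) =
         (\<Sum>j\<in>removable r. \<Sum>i\<in>addable (del_box r j) - {j}. g (add_box (del_box r j) i))"
proof -
  define A where "A = (SIGMA i:addable r. removable (add_box r i) - {i})"
  define B where "B = (SIGMA j:removable r. addable (del_box r j) - {j})"
  have fin: "finite (removable (add_box r i))" if "i \<in> addable r" for i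
    using finite_removable is_row_fun_add_box_iff[OF r] that by blast
  have fin': "finite (addable (del_box r j))" if "j \<in> removable r" for j
    using finite_addable is_row_fun_del_box[OF r] that by blast
  have AB: "A = prod.swap ` B"
    unfolding A_def B_def using add_then_del_iff_del_then_add[of _ r] by force
  have "(\<Sum>i\<in>addable r. \<Sum>j\<in>removable (add_box r i) - {i}. g (del_box (add_box r i) j)) =
        (\<Sum>(i, j)\<in>A. g (del_box (add_box r i) j))"
    unfolding A_def using finite_addable[OF r] fin by (simp add: sum.Sigma)
  also have "\<dots> = (\<Sum>(j, i)\<in>B. g (del_box (add_box r i) j))"
    unfolding AB by (simp add: sum.reindex case_prod_unfold)
  also have "\<dots> = (\<Sum>(j, i)\<in>B. g (add_box (del_box r j) i))"
  proof (rule sum.cong[OF refl])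
    fix x assume "x \<in> B"
    then obtain j i where "x = (j, i)" "i \<noteq> j" unfolding B_def by auto
    then show "(case x of (j, i) \<Rightarrow> g (del_box (add_box r i) j)) =
               (case x of (j, i) \<Rightarrow> g (add_box (del_box r j) i))"
      by (simp add: add_box_del_box_swap)
  qed
  also have "\<dots> = (\<Sum>j\<in>removable r. \<Sum>i\<in>addable (del_box r j) - {j}. g (add_box (del_box r j) i))"
    unfolding B_def using finite_removable[OF r] fin' by (simp add: sum.Sigma)
  finally show ?thesis .
qed

lemma syt_count_add_box: assumes r: "is_row_fun r" and i: "i \<in> addable r"
  shows "syt_count (add_box r i) =
    syt_count r + (\<Sum>j\<in>removable (add_box r i) - {i}. syt_count (del_box (add_box r i) j))"
proof -
  have r': "is_row_fun (add_box r i)" using is_row_fun_add_box_iff[OF r] i by simp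
  have "syt_count (add_box r i) = (\<Sum>j\<in>removable (add_box r i). syt_count (del_box (add_box r i) j))"
    using syt_count_eq_sum_removable[OF r'] row_sum_add_box[OF r i] by simp
  also have "\<dots> =
      syt_count r + (\<Sum>j\<in>removable (add_box r i) - {i}. syt_count (del_box (add_box r i) j))"
    using sum.remove[OF finite_removable[OF r'] removable_add_box[OF r],
        of "\<lambda>j. syt_count (del_box (add_box r i) j)"] by simp
  finally show ?thesis .
qed

lemma sum_addable_syt_count:
  "is_row_fun r \<Longrightarrow> (\<Sum>i\<in>addable r. syt_count (add_box r i)) = Suc (row_sum r) * syt_count r"
proof (induction "row_sum r" arbitrary: r rule: less_induct)
  case less
  note r = less.prems
  define k where "k = row_sum r"
  define Y where "Y =
      (\<Sum>j\<in>removable r. \<Sum>i\<in>addable (del_box r j) - {j}. syt_count (add_box (del_box r j) i))"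
  have up: "(\<Sum>i\<in>addable r. syt_count (add_box r i)) = card (addable r) * syt_count r + Y"
    unfolding Y_def sum_add_del_box_swap[OF r, symmetric]
    by (simp add: syt_count_add_box[OF r] sum.distrib cong: sum.cong)
  have "k * syt_count (del_box r j) =
        syt_count r + (\<Sum>i\<in>addable (del_box r j) - {j}. syt_count (add_box (del_box r j) i))"
    if j: "j \<in> removable r" for j
  proof -
    have r': "is_row_fun (del_box r j)" using is_row_fun_del_box[OF r j] .
    have "0 < r j" using j unfolding removable_def by auto
    then have "(\<Sum>i\<in>addable (del_box r j). syt_count (add_box (del_box r j) i)) =
          syt_count r + (\<Sum>i\<in>addable (del_box r j) - {j}. syt_count (add_box (del_box r j) i))"
      using sum.remove[OF finite_addable[OF r'] addable_del_box[OF r j],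
          of "\<lambda>i. syt_count (add_box (del_box r j) i)"] by (simp add: add_box_del_box)
    then show ?thesis using less.hyps[OF _ r'] row_sum_del_box[OF r j] unfolding k_def by simp
  qed
  then have down: "(\<Sum>j\<in>removable r. k * syt_count (del_box r j)) =
      card (removable r) * syt_count r + Y"
    unfolding Y_def by (simp add: sum.distrib cong: sum.cong)
  have "(\<Sum>j\<in>removable r. k * syt_count (del_box r j)) = k * syt_count r"
    using syt_count_eq_sum_removable[OF r] unfolding k_def
    by (cases "row_sum r = 0") (simp_all add: sum_distrib_left)
  text \<open>\<open>up\<close> and \<open>down\<close> differ only in their diagonal terms, and there is one more addable
    than removable row.\<close>
  then show ?case using up down card_addable[OF r] unfolding k_def by simp
qed

section \<open>The coefficients and their closed forms\<close>

text \<open>Since \<open>syt_count\<close> satisfies the down and up identities above, \<open>ot_count r L\<close> and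
  \<open>ot_weight r L\<close> are \<open>syt_count r\<close> times numbers depending only on \<open>L\<close> and \<open>|r|\<close>,
  given by the following recurrences.\<close>
fun count_coeff :: "nat \<Rightarrow> nat \<Rightarrow> nat" where
  "count_coeff 0 k = (if k = 0 then 1 else 0)"
| "count_coeff (Suc L) k =
    (case k of 0 \<Rightarrow> 0 | Suc k' \<Rightarrow> count_coeff L k') + Suc k * count_coeff L (Suc k)"

fun weight_coeff :: "nat \<Rightarrow> nat \<Rightarrow> nat" where
  "weight_coeff 0 k = 0"
| "weight_coeff (Suc L) k = (case k of 0 \<Rightarrow> 0 | Suc k' \<Rightarrow> weight_coeff L k') +
     Suc k * weight_coeff L (Suc k) + k * count_coeff (Suc L) k"

lemma sum_removable_syt_count: assumes "is_row_fun r"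
  shows "(\<Sum>j\<in>removable r. syt_count (del_box r j)) = (if row_sum r = 0 then 0 else syt_count r)"
  using syt_count_eq_sum_removable[OF assms] removable_empty[OF assms] by auto

lemma ot_count_eq: "is_row_fun r \<Longrightarrow> ot_count r L = count_coeff L (row_sum r) * syt_count r"
proof (induction L arbitrary: r)
  case 0
  then show ?case by (simp add: ot_count_0 syt_count_empty)
next
  case (Suc L)
  note r = Suc.prems
  have "row_sum (del_box r j) = row_sum r - 1" if "j \<in> removable r" for j
    using row_sum_del_box[OF r that] by simp
  then have "ot_count r (Suc L) =
        count_coeff L (row_sum r - 1) * (\<Sum>j\<in>removable r. syt_count (del_box r j)) +
        count_coeff L (Suc (row_sum r)) * (\<Sum>i\<in>addable r. syt_count (add_box r i))"
    unfolding ot_count_Suc[OF r] sum_distrib_left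
    using Suc.IH is_row_fun_del_box[OF r] is_row_fun_add_box_iff[OF r] row_sum_add_box[OF r]
    by (simp cong: sum.cong del: count_coeff.simps)
  then show ?case
    by (cases "row_sum r")
      (simp_all add: sum_removable_syt_count[OF r] sum_addable_syt_count[OF r] algebra_simps)
qed

lemma ot_weight_eq: "is_row_fun r \<Longrightarrow> ot_weight r L = weight_coeff L (row_sum r) * syt_count r"
proof (induction L arbitrary: r)
  case 0
  then show ?case by (simp add: ot_weight_0)
next
  case (Suc L)
  note r = Suc.prems
  define k where "k = row_sum r"
  have "row_sum (del_box r j) = k - 1" if "j \<in> removable r" for j
    using row_sum_del_box[OF r that] unfolding k_def by simp
  then have "ot_weight r (Suc L) =
        (weight_coeff L (k - 1) + k * count_coeff L (k - 1)) *
          (\<Sum>j\<in>removable r. syt_count (del_box r j)) +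
        (weight_coeff L (Suc k) + k * count_coeff L (Suc k)) *
          (\<Sum>i\<in>addable r. syt_count (add_box r i))"
    unfolding ot_weight_Suc[OF r] sum_distrib_left k_def
    using Suc.IH ot_count_eq is_row_fun_del_box[OF r] is_row_fun_add_box_iff[OF r]
      row_sum_add_box[OF r]
    by (simp add: algebra_simps cong: sum.cong del: count_coeff.simps weight_coeff.simps)
  then show ?case unfolding k_def[symmetric]
    by (cases k)
      (simp_all add: k_def sum_removable_syt_count[OF r] sum_addable_syt_count[OF r] algebra_simps)
qed

definition osc_count :: "nat \<Rightarrow> nat \<Rightarrow> real" where
  "osc_count k n = fact (k + 2 * n) / (fact k * 2 ^ n * fact n)"

definition mean_weight :: "nat \<Rightarrow> nat \<Rightarrow> real" where
  "mean_weight k n =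
      (4 * real n ^ 2 + 3 * real k ^ 2 + 8 * real k * real n + 2 * real n + 3 * real k) / 6"

lemma osc_count_pos: "0 < osc_count k n"
  unfolding osc_count_def by simp

lemma osc_count_0: "osc_count k 0 = 1"
  unfolding osc_count_def by simp

lemma osc_count_mult: "osc_count k n * (fact k * 2 ^ n * fact n) = fact (k + 2 * n)"
  unfolding osc_count_def by simp

lemma osc_count_Suc_fst:
  "(real k + 1) * osc_count (Suc k) n = (real k + 2 * real n + 1) * osc_count k n"
proof -
  define D :: real where "D = fact k * 2 ^ n * fact n"
  have "(real k + 1) * osc_count (Suc k) n * D = fact (Suc (k + 2 * n))"
    using osc_count_mult[of "Suc k" n] unfolding D_def by (simp add: algebra_simps)
  also have "\<dots> = (real k + 2 * real n + 1) * osc_count k n * D"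
    unfolding fact_Suc osc_count_mult[of k n, symmetric] D_def by (simp add: algebra_simps)
  finally show ?thesis unfolding D_def by simp
qed

lemma osc_count_Suc_snd:
  "(2 * real n + 2) * osc_count k (Suc n) =
      (real k + 1) * (real k + 2 * real n + 2) * osc_count (Suc k) n"
proof -
  define D :: real where "D = fact k * 2 ^ n * fact n"
  have Suc_k: "osc_count (Suc k) n * ((real k + 1) * D) = fact (Suc (k + 2 * n))"
    using osc_count_mult[of "Suc k" n] unfolding D_def by (simp add: algebra_simps)
  have "(2 * real n + 2) * osc_count k (Suc n) * D = fact (Suc (Suc (k + 2 * n)))"
    using osc_count_mult[of k "Suc n"] unfolding D_def by (simp add: algebra_simps)
  also have "\<dots> = (real k + 1) * (real k + 2 * real n + 2) * osc_count (Suc k) n * D"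
    unfolding fact_Suc[of "Suc (k + 2 * n)"] Suc_k[symmetric] by (simp add: algebra_simps)
  finally show ?thesis unfolding D_def by simp
qed

lemma osc_count_1: "osc_count 1 n = osc_count 0 (Suc n)"
proof -
  have "(2 * real n + 2) * osc_count 1 n = (2 * real n + 2) * osc_count 0 (Suc n)"
    using osc_count_Suc_snd[of n 0] by (simp add: algebra_simps)
  then show ?thesis by simp
qed

lemma osc_count_Suc_Suc:
  "osc_count (Suc k) (Suc n) = osc_count k (Suc n) + (real k + 2) * osc_count (Suc (Suc k)) n"
proof -
  define s where "s = real k + 2 * real n + 3"
  have "s * osc_count k (Suc n) = (real k + 1) * osc_count (Suc k) (Suc n)"
    using osc_count_Suc_fst[of k "Suc n"] unfolding s_def by (simp add: algebra_simps)
  moreover have "s * ((real k + 2) * osc_count (Suc (Suc k)) n) =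
      (2 * real n + 2) * osc_count (Suc k) (Suc n)"
    using osc_count_Suc_snd[of n "Suc k"] unfolding s_def by (simp add: algebra_simps)
  ultimately have "s * (osc_count k (Suc n) + (real k + 2) * osc_count (Suc (Suc k)) n) =
      s * osc_count (Suc k) (Suc n)"
    unfolding s_def by (simp add: algebra_simps)
  moreover have "s \<noteq> 0" unfolding s_def by simp
  ultimately show ?thesis by simp
qed

lemma mean_weight_Suc_Suc:
  "osc_count (Suc k) (Suc n) * mean_weight (Suc k) (Suc n) =
     osc_count k (Suc n) * (mean_weight k (Suc n) + real k + 1) +
     (real k + 2) * osc_count (Suc (Suc k)) n * (mean_weight (Suc (Suc k)) n + real k + 1)"
proof -
  define s where "s = real k + 2 * real n + 3"
  define x where "x = osc_count (Suc k) (Suc n)"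
  define y where "y = osc_count k (Suc n)"
  define z where "z = (real k + 2) * osc_count (Suc (Suc k)) n"
  define g1 where "g1 = mean_weight k (Suc n) + real k + 1"
  define g2 where "g2 = mean_weight (Suc (Suc k)) n + real k + 1"
  have y: "s * y = (real k + 1) * x"
    using osc_count_Suc_fst[of k "Suc n"] unfolding s_def x_def y_def by (simp add: algebra_simps)
  have z: "s * z = (2 * real n + 2) * x"
    using osc_count_Suc_snd[of n "Suc k"] unfolding s_def x_def z_def by (simp add: algebra_simps)
  have g: "s * mean_weight (Suc k) (Suc n) = (real k + 1) * g1 + (2 * real n + 2) * g2"
    unfolding s_def g1_def g2_def mean_weight_def by (simp add: field_simps power2_eq_square)
  have "s * (x * mean_weight (Suc k) (Suc n)) = x * ((real k + 1) * g1 + (2 * real n + 2) * g2)"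
    by (simp only: g mult.left_commute[of s x])
  also have "\<dots> = s * (y * g1 + z * g2)" by (simp add: algebra_simps y z)
  finally have "s * (x * mean_weight (Suc k) (Suc n)) = s * (y * g1 + z * g2)" .
  moreover have "s \<noteq> 0" unfolding s_def by simp
  ultimately have "x * mean_weight (Suc k) (Suc n) = y * g1 + z * g2" by simp
  then show ?thesis unfolding x_def y_def z_def g1_def g2_def by (simp add: algebra_simps)
qed

lemma mean_weight_1: "mean_weight 1 n = mean_weight 0 (Suc n)"
  unfolding mean_weight_def by (simp add: field_simps power2_eq_square)

lemma mean_weight_Suc_0: "mean_weight (Suc k) 0 = mean_weight k 0 + real k + 1"
  unfolding mean_weight_def by (simp add: field_simps power2_eq_square)

lemma count_coeff_eq_0: "L < k \<Longrightarrow> count_coeff L k = 0"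
  by (induction L arbitrary: k) (auto split: nat.split)

lemma weight_coeff_eq_0: "L < k \<Longrightarrow> weight_coeff L k = 0"
proof (induction L arbitrary: k)
  case (Suc L)
  then show ?case
    using count_coeff_eq_0[of "Suc L" k] by (auto split: nat.split simp del: count_coeff.simps)
qed simp

lemma count_coeff_closed: "L = k + 2 * n \<Longrightarrow> real (count_coeff L k) = osc_count k n"
proof (induction L arbitrary: k n)
  case 0
  then show ?case by (simp add: osc_count_0)
next
  case (Suc L)
  consider (k0) n' where "k = 0" "n = Suc n'" | (n0) k' where "k = Suc k'" "n = 0"
    | (step) k' n' where "k = Suc k'" "n = Suc n'"
    using Suc.prems by (cases k; cases n) auto
  then show ?case
  proof cases
    case k0
    have "real (count_coeff L 1) = osc_count 1 n'" by (rule Suc.IH) (use Suc.prems k0 in simp)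
    then show ?thesis using k0 osc_count_1 by simp
  next
    case n0
    have "real (count_coeff L k') = osc_count k' 0" by (rule Suc.IH) (use Suc.prems n0 in simp)
    then show ?thesis using n0 count_coeff_eq_0[of L "Suc k"] Suc.prems by (simp add: osc_count_0)
  next
    case step
    have "real (count_coeff L k') = osc_count k' (Suc n')"
      "real (count_coeff L (Suc (Suc k'))) = osc_count (Suc (Suc k')) n'"
      by (rule Suc.IH; use Suc.prems step in simp)+
    then show ?thesis using step osc_count_Suc_Suc by (simp add: algebra_simps)
  qed
qed

lemma weight_coeff_closed:
  "L = k + 2 * n \<Longrightarrow> real (weight_coeff L k) = osc_count k n * mean_weight k n"
proof (induction L arbitrary: k n)
  case 0
  then show ?case by (simp add: osc_count_0 mean_weight_def)
next
  case (Suc L)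
  have count: "real (count_coeff (Suc L) k) = osc_count k n"
    using count_coeff_closed Suc.prems by blast
  consider (k0) n' where "k = 0" "n = Suc n'" | (n0) k' where "k = Suc k'" "n = 0"
    | (step) k' n' where "k = Suc k'" "n = Suc n'"
    using Suc.prems by (cases k; cases n) auto
  then show ?case
  proof cases
    case k0
    have "real (weight_coeff L 1) = osc_count 1 n' * mean_weight 1 n'"
      by (rule Suc.IH) (use Suc.prems k0 in simp)
    then show ?thesis using k0 osc_count_1 mean_weight_1 by (simp del: count_coeff.simps)
  next
    case n0
    have "real (weight_coeff L k') = osc_count k' 0 * mean_weight k' 0"
      by (rule Suc.IH) (use Suc.prems n0 in simp)
    then show ?thesis using n0 count weight_coeff_eq_0[of L "Suc k"] Suc.prems
      by (simp add: osc_count_0 mean_weight_Suc_0 del: count_coeff.simps)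
  next
    case step
    have "real (weight_coeff L k') = osc_count k' (Suc n') * mean_weight k' (Suc n')"
      "real (weight_coeff L (Suc (Suc k'))) =
          osc_count (Suc (Suc k')) n' * mean_weight (Suc (Suc k')) n'"
      by (rule Suc.IH; use Suc.prems step in simp)+
    then show ?thesis using step count osc_count_Suc_Suc[of k' n'] mean_weight_Suc_Suc[of k' n']
      by (simp add: algebra_simps del: count_coeff.simps)
  qed
qed

theorem theorem2:
  fixes lam :: "nat list" and k n :: nat
  assumes "is_partition lam" and "psize lam = k"
  shows "(1 / real (card (OT lam (k + 2 * n)))) * (\<Sum>T\<in>OT lam (k + 2 * n). real (wt T))
         = (4 * real n ^ 2 + 3 * real k ^ 2 + 8 * real k * real n + 2 * real n + 3 * real k) / 6"
proof -
  define r where "r = row_fun lam"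
  have r: "is_row_fun r" using is_row_fun_row_fun[OF assms(1)] unfolding r_def .
  have lam: "partition_of r = lam" using partition_of_row_fun[OF assms(1)] unfolding r_def .
  have k: "row_sum r = k" using psize_eq_row_sum[OF assms(1)] assms(2) unfolding r_def by simp
  have "real (card (OT lam (k + 2 * n))) = osc_count k n * syt_count r"
    using ot_count_eq[OF r] count_coeff_closed unfolding ot_count_def lam k by simp
  moreover have "(\<Sum>T\<in>OT lam (k + 2 * n). real (wt T)) =
      osc_count k n * mean_weight k n * syt_count r"
    using ot_weight_eq[OF r] weight_coeff_closed
    unfolding ot_weight_def lam k of_nat_sum[symmetric] by simp
  moreover have "0 < osc_count k n" "0 < syt_count r"
    using osc_count_pos syt_count_pos[OF r] by auto
  ultimately show ?thesis unfolding mean_weight_def by simp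
qed

end
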